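(* Let $\mathbf{w}\in\Sigma^\omega$ be an infinite word with appearance constant $\mathbf{A}_\mathbf{w}<\infty$, and let $S\subseteq\mathbb{N}$ be the greedy string attractor for $\mathbf{w}$. Then for all $n\ge0$, $S\cap[0..n-1]$ is a string attractor for $\mathbf{w}[0..n-1]$, and its size is $O(\mathbf{A}_\mathbf{w}\log n)$ (with an absolute implied constant).
   Context: $\Sigma$ is a finite alphabet; words are indexed from $0$ and $[a..b]=\{a,\ldots,b\}$. The appearance constant $\mathbf{A}_\mathbf{w}$ is the least constant $C$ such that for every $m\ge1$, every length-$m$ factor of $\mathbf{w}$ has an occurrence in the prefix of length at most $Cm$. For a set $T\subseteq\mathbb{N}$ and $j\ge0$, say $T$ is a string attractor for $\mathbf{w}[0..j]$ if every nonempty factor of $\mathbf{w}[0..j]$ has an occurrence $\mathbf{w}[p..q]$ with $q\le j$ and $p\le t\le q$ for some $t\in T$. The greedy string attractor of $\mathbf{w}$ is $S=\bigcup_{m}S_m$ where $S_0=\emptyset$ and, for $m\ge0$, $S_{m+1}=S_m\cup\{j\}$ with $j$ the smallest integer such that $S_m$ is not a string attractor for $\mathbf{w}[0..j]$ (and $S_{m+1}=S_m$ if no such $j$ exists). *)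

theory Defs
  imports Complex_Main
begin

text \<open>Infinite words over a finite alphabet are modelled as w :: nat \<Rightarrow> nat with
  finite range (every finite alphabet embeds into nat). Positions start at 0.\<close>

definition appear_ok :: "(nat \<Rightarrow> nat) \<Rightarrow> real \<Rightarrow> bool" where
  "appear_ok w C \<longleftrightarrow>
     (\<forall>m i. m \<ge> 1 \<longrightarrow> (\<exists>p. real (p + m) \<le> C * real m \<and> (\<forall>k<m. w (p + k) = w (i + k))))"

text \<open>Appearance constant: the least such C (finite iff some C exists).\<close>
definition appearance_const :: "(nat \<Rightarrow> nat) \<Rightarrow> real" where
  "appearance_const w = Inf {C. appear_ok w C}"

definition prefix_attractor :: "(nat \<Rightarrow> nat) \<Rightarrow> nat set \<Rightarrow> nat \<Rightarrow> bool" where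
  "prefix_attractor w T n \<longleftrightarrow>
     (\<forall>i l. l \<ge> 1 \<and> i + l \<le> n \<longrightarrow>
        (\<exists>p t. p + l \<le> n \<and> t \<in> T \<and> p \<le> t \<and> t < p + l \<and>
               (\<forall>k<l. w (p + k) = w (i + k))))"

text \<open>Greedy construction: S_0 = {}, S_(m+1) = S_m \<union> {j} with j least such that S_m is not
  a string attractor for w[0..j] (= prefix of length j+1).\<close>
primrec greedy_step :: "(nat \<Rightarrow> nat) \<Rightarrow> nat \<Rightarrow> nat set" where
  "greedy_step w 0 = {}"
| "greedy_step w (Suc m) =
     (if \<exists>j. \<not> prefix_attractor w (greedy_step w m) (Suc j)
      then insert (LEAST j. \<not> prefix_attractor w (greedy_step w m) (Suc j)) (greedy_step w m)
      else greedy_step w m)"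

definition greedy_attractor :: "(nat \<Rightarrow> nat) \<Rightarrow> nat set" where
  "greedy_attractor w = (\<Union>m. greedy_step w m)"

end

theory Submission
  imports Defs
begin

(*
  Suppose a stage T = S_m of the greedy construction attracts w[0..j-1] but not w[0..j],
  so that j is the next position added. A factor of w[0..j] that is
  not attracted must be a suffix w[i..j] with no occurrence in w[0..j-1], and i lies beyond
  every position s < j of T. Then w[s+1..j] has no occurrence in w[0..j-1] either, so by the
  appearance condition j + 1 <= A (j - s). Hence any two positions s < j of the greedy
  attractor satisfy s + 1 <= (1 - 1/A) (j + 1): the positions grow geometrically, and at most
  1 + A ln n of them lie below n.
*)

lemma prefix_attractor_mono:
  "prefix_attractor w T n \<Longrightarrow> T \<subseteq> T' \<Longrightarrow> prefix_attractor w T' n"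
  unfolding prefix_attractor_def by blast

lemma prefix_attractor_Int_lessThan:
  assumes "prefix_attractor w T n"
  shows "prefix_attractor w (T \<inter> {..<n}) n"
  unfolding prefix_attractor_def
proof (intro allI impI)
  fix i l :: nat
  assume "1 \<le> l \<and> i + l \<le> n"
  then obtain p t where "p + l \<le> n" "t \<in> T" "p \<le> t" "t < p + l" "\<forall>k<l. w (p + k) = w (i + k)"
    using assms unfolding prefix_attractor_def by blast
  then show "\<exists>p t. p + l \<le> n \<and> t \<in> T \<inter> {..<n} \<and> p \<le> t \<and> t < p + l \<and>
      (\<forall>k<l. w (p + k) = w (i + k))"
    by (intro exI[of _ p] exI[of _ t]) auto
qed

lemma prefix_attractor_0 [simp]: "prefix_attractor w T 0"
  unfolding prefix_attractor_def by simp

lemma prefix_attractor_Suc: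
  assumes "prefix_attractor w T j" "j \<in> T"
  shows "prefix_attractor w T (Suc j)"
  unfolding prefix_attractor_def
proof (intro allI impI)
  fix i l :: nat
  assume il: "1 \<le> l \<and> i + l \<le> Suc j"
  show "\<exists>p t. p + l \<le> Suc j \<and> t \<in> T \<and> p \<le> t \<and> t < p + l \<and> (\<forall>k<l. w (p + k) = w (i + k))"
  proof (cases "i + l \<le> j")
    case True
    then show ?thesis
      using assms(1) il unfolding prefix_attractor_def by (meson le_SucI)
  next
    case False
    then show ?thesis
      using il assms(2) by (intro exI[of _ i] exI[of _ j]) auto
  qed
qed

definition occurs_in_prefix :: "(nat \<Rightarrow> nat) \<Rightarrow> nat \<Rightarrow> nat \<Rightarrow> nat \<Rightarrow> bool" where
  "occurs_in_prefix w i l n \<longleftrightarrow> (\<exists>p. p + l \<le> n \<and> (\<forall>k<l. w (p + k) = w (i + k)))"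

lemma occurs_in_prefix_subfactor:
  assumes "occurs_in_prefix w a L n" "a \<le> i" "i + l \<le> a + L"
  shows "occurs_in_prefix w i l n"
proof -
  obtain p where p: "p + L \<le> n" "\<forall>k<L. w (p + k) = w (a + k)"
    using assms(1) unfolding occurs_in_prefix_def by blast
  have "w (p + (i - a) + k) = w (i + k)" if "k < l" for k
    using p(2)[rule_format, of "i - a + k"] that assms(2,3) by (simp add: add.assoc)
  moreover have "p + (i - a) + l \<le> n"
    using p(1) assms(2,3) by linarith
  ultimately show ?thesis
    unfolding occurs_in_prefix_def by blast
qed

lemma appear_ok_ge_1: "appear_ok w C \<Longrightarrow> 1 \<le> C"
  unfolding appear_ok_def by (drule spec[of _ 1]) auto

lemma appear_ok_not_occurs_in_prefix:
  assumes "appear_ok w C" "1 \<le> l" "\<not> occurs_in_prefix w i l n"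
  shows "real (Suc n) \<le> C * real l"
proof -
  obtain p where p: "real (p + l) \<le> C * real l" "\<forall>k<l. w (p + k) = w (i + k)"
    using assms(1,2) unfolding appear_ok_def by blast
  then have "n < p + l"
    using assms(3) unfolding occurs_in_prefix_def by (meson not_le)
  then show ?thesis
    using p(1) by linarith
qed

lemma not_prefix_attractor_SucE:
  assumes "prefix_attractor w T j" "\<not> prefix_attractor w T (Suc j)"
  obtains i where "i \<le> j" "\<And>t. t \<in> T \<Longrightarrow> t \<le> j \<Longrightarrow> t < i"
    "\<not> occurs_in_prefix w i (Suc j - i) j"
proof -
  obtain i l where l: "1 \<le> l" "i + l \<le> Suc j" and uncovered:
    "\<And>p t. p + l \<le> Suc j \<Longrightarrow> t \<in> T \<Longrightarrow> p \<le> t \<Longrightarrow> t < p + l \<Longrightarrow>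
       \<not> (\<forall>k<l. w (p + k) = w (i + k))"
    using assms(2) unfolding prefix_attractor_def by blast
  have not_occurs: "\<not> occurs_in_prefix w i l j"
  proof
    assume "occurs_in_prefix w i l j"
    then obtain q where q: "q + l \<le> j" "\<forall>k<l. w (q + k) = w (i + k)"
      unfolding occurs_in_prefix_def by blast
    then obtain p t where "p + l \<le> j" "t \<in> T" "p \<le> t" "t < p + l"
      "\<forall>k<l. w (p + k) = w (q + k)"
      using assms(1) l(1) unfolding prefix_attractor_def by blast
    then show False
      using uncovered[of p t] q(2) by auto
  qed
  then have "\<not> i + l \<le> j"
    unfolding occurs_in_prefix_def by blast
  then have suffix: "i + l = Suc j"
    using l(2) by linarith
  have "t < i" if "t \<in> T" "t \<le> j" for t
    using uncovered[of i t] that suffix by force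
  moreover have "l = Suc j - i" "i \<le> j"
    using suffix l(1) by linarith+
  ultimately show ?thesis
    using that not_occurs by blast
qed

lemma not_prefix_attractor_Suc_gap:
  assumes "prefix_attractor w T j" "\<not> prefix_attractor w T (Suc j)"
    and "s \<in> T" "s < j" "appear_ok w C"
  shows "real (Suc j) \<le> C * real (j - s)"
proof -
  obtain i where i: "i \<le> j" "s < i" and new: "\<not> occurs_in_prefix w i (Suc j - i) j"
    using not_prefix_attractor_SucE[OF assms(1,2)] assms(3,4) by (metis less_imp_le)
  have "\<not> occurs_in_prefix w (Suc s) (j - s) j"
    using new occurs_in_prefix_subfactor[of w "Suc s" "j - s" j i "Suc j - i"] i by auto
  moreover have "1 \<le> j - s"
    using assms(4) by simp
  ultimately show ?thesis
    by (rule appear_ok_not_occurs_in_prefix[OF assms(5), rotated])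
qed

lemma greedy_step_Suc_stable:
  "\<forall>n. prefix_attractor w (greedy_step w m) n \<Longrightarrow> greedy_step w (Suc m) = greedy_step w m"
  by simp

lemma greedy_step_Suc_insert:
  assumes "\<not> (\<forall>n. prefix_attractor w (greedy_step w m) n)"
  obtains j where "greedy_step w (Suc m) = insert j (greedy_step w m)"
    "\<forall>n\<le>j. prefix_attractor w (greedy_step w m) n"
    "\<not> prefix_attractor w (greedy_step w m) (Suc j)"
proof -
  let ?T = "greedy_step w m"
  have fails: "\<exists>j. \<not> prefix_attractor w ?T (Suc j)"
    using assms by (metis not0_implies_Suc prefix_attractor_0)
  define j where "j = (LEAST j. \<not> prefix_attractor w ?T (Suc j))"
  have "prefix_attractor w ?T n" if "n \<le> j" for n
  proof (cases n)
    case (Suc n')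
    then show ?thesis
      using that not_less_Least[of n' "\<lambda>j. \<not> prefix_attractor w ?T (Suc j)"] j_def by simp
  qed simp
  moreover have "\<not> prefix_attractor w ?T (Suc j)"
    unfolding j_def using fails by (rule LeastI_ex)
  moreover have "greedy_step w (Suc m) = insert j ?T"
    using fails j_def by simp
  ultimately show ?thesis
    using that by blast
qed

lemma prefix_attractor_greedy_step_le_Suc:
  "x \<in> greedy_step w m \<Longrightarrow> n \<le> Suc x \<Longrightarrow> prefix_attractor w (greedy_step w m) n"
proof (induction m arbitrary: x n)
  case (Suc m)
  show ?case
  proof (cases "\<forall>n. prefix_attractor w (greedy_step w m) n")
    case True
    then show ?thesis
      using greedy_step_Suc_stable by metis
  next
    case False
    then obtain j where step: "greedy_step w (Suc m) = insert j (greedy_step w m)"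
      and below: "\<forall>n\<le>j. prefix_attractor w (greedy_step w m) n"
      using greedy_step_Suc_insert by metis
    have sub: "greedy_step w m \<subseteq> greedy_step w (Suc m)"
      using step by blast
    have "prefix_attractor w (greedy_step w (Suc m)) (Suc j)"
      using below prefix_attractor_mono[OF _ sub] prefix_attractor_Suc step by simp
    moreover have "prefix_attractor w (greedy_step w (Suc m)) n" if "n \<le> j" for n
      using below that prefix_attractor_mono[OF _ sub] by blast
    moreover have "prefix_attractor w (greedy_step w (Suc m)) n" if "x \<in> greedy_step w m"
      using Suc.IH[OF that Suc.prems(2)] prefix_attractor_mono[OF _ sub] by blast
    ultimately show ?thesis
      using Suc.prems step by (metis insertE le_SucE)
  qed
qed simp

lemma greedy_step_SucE:
  assumes "\<not> (\<forall>n. prefix_attractor w (greedy_step w m) n)"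
  obtains j where "greedy_step w (Suc m) = insert j (greedy_step w m)"
    "\<forall>x\<in>greedy_step w m. x < j"
    "prefix_attractor w (greedy_step w m) j"
    "\<not> prefix_attractor w (greedy_step w m) (Suc j)"
proof -
  obtain j where step: "greedy_step w (Suc m) = insert j (greedy_step w m)"
    and below: "\<forall>n\<le>j. prefix_attractor w (greedy_step w m) n"
    and fail: "\<not> prefix_attractor w (greedy_step w m) (Suc j)"
    using greedy_step_Suc_insert[OF assms] by metis
  have "x < j" if "x \<in> greedy_step w m" for x
    using prefix_attractor_greedy_step_le_Suc[OF that, of "Suc j"] fail by (metis not_less Suc_le_mono)
  then show ?thesis
    using that step below fail by blast
qed

lemma prefix_attractor_greedy_step:
  "n \<le> m \<Longrightarrow> prefix_attractor w (greedy_step w m) n"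
proof (induction m arbitrary: n)
  case (Suc m)
  show ?case
  proof (cases "\<forall>n. prefix_attractor w (greedy_step w m) n")
    case True
    then show ?thesis
      using greedy_step_Suc_stable by metis
  next
    case False
    then obtain j where step: "greedy_step w (Suc m) = insert j (greedy_step w m)"
      and fail: "\<not> prefix_attractor w (greedy_step w m) (Suc j)"
      using greedy_step_SucE by metis
    have "m \<le> j"
      using Suc.IH[of "Suc j"] fail by (metis not_less_eq_eq)
    then show ?thesis
      using prefix_attractor_greedy_step_le_Suc[of j w "Suc m" n] step Suc.prems by simp
  qed
qed simp

lemma greedy_step_gap:
  assumes "appear_ok w C"
  shows "s \<in> greedy_step w m \<Longrightarrow> j \<in> greedy_step w m \<Longrightarrow> s < j \<Longrightarrow>
    real (Suc j) \<le> C * real (j - s)"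
proof (induction m arbitrary: s j)
  case (Suc m)
  show ?case
  proof (cases "\<forall>n. prefix_attractor w (greedy_step w m) n")
    case True
    then show ?thesis
      using Suc greedy_step_Suc_stable by metis
  next
    case False
    then obtain j' where step: "greedy_step w (Suc m) = insert j' (greedy_step w m)"
      and older: "\<forall>x\<in>greedy_step w m. x < j'"
      and attracts: "prefix_attractor w (greedy_step w m) j'"
      and fail: "\<not> prefix_attractor w (greedy_step w m) (Suc j')"
      by (rule greedy_step_SucE)
    show ?thesis
    proof (cases "j = j'")
      case True
      then show ?thesis
        using not_prefix_attractor_Suc_gap[OF attracts fail _ _ assms] Suc.prems step by auto
    next
      case False
      then show ?thesis
        using Suc older step by (metis insertE less_asym)
    qed
  qed
qed simp

lemma greedy_step_mono: "m \<le> m' \<Longrightarrow> greedy_step w m \<subseteq> greedy_step w m'"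
  by (rule lift_Suc_mono_le[of "greedy_step w"]) auto

lemma greedy_attractor_gap:
  assumes "appear_ok w C" "s \<in> greedy_attractor w" "j \<in> greedy_attractor w" "s < j"
  shows "real (Suc j) \<le> C * real (j - s)"
proof -
  obtain ms mj where "s \<in> greedy_step w ms" "j \<in> greedy_step w mj"
    using assms(2,3) unfolding greedy_attractor_def by blast
  then have "s \<in> greedy_step w (max ms mj)" "j \<in> greedy_step w (max ms mj)"
    using greedy_step_mono[of ms "max ms mj" w] greedy_step_mono[of mj "max ms mj" w] by auto
  then show ?thesis
    using greedy_step_gap[OF assms(1)] assms(4) by blast
qed

lemma prefix_attractor_greedy_attractor:
  "prefix_attractor w (greedy_attractor w \<inter> {..<n}) n"
proof -
  have "greedy_step w n \<subseteq> greedy_attractor w"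
    unfolding greedy_attractor_def by blast
  then show ?thesis
    using prefix_attractor_greedy_step[of n n w] prefix_attractor_mono prefix_attractor_Int_lessThan
    by blast
qed

lemma ln_gap:
  fixes a b C :: real
  assumes "0 < a" "a \<le> b" "b \<le> C * (b - a)"
  shows "1 + C * ln a \<le> C * ln b"
proof -
  have "0 < b"
    using assms(1,2) by linarith
  have "0 \<le> C"
  proof (rule ccontr)
    assume "\<not> 0 \<le> C"
    then have "C * (b - a) \<le> 0"
      using assms(2) by (simp add: mult_nonpos_nonneg)
    then show False
      using assms(3) \<open>0 < b\<close> by linarith
  qed
  have "(b - a) / b \<le> ln b - ln a"
    using ln_le_minus_one[of "a / b"] \<open>0 < a\<close> \<open>0 < b\<close> by (simp add: ln_div field_simps)
  have "1 \<le> C * ((b - a) / b)"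
    using assms(3) \<open>0 < b\<close> by (simp add: field_simps)
  also have "\<dots> \<le> C * (ln b - ln a)"
    using \<open>(b - a) / b \<le> ln b - ln a\<close> \<open>0 \<le> C\<close> by (rule mult_left_mono)
  finally show ?thesis
    by (simp add: algebra_simps)
qed

lemma card_le_ln_if_gaps:
  fixes F :: "nat set" and C :: real
  assumes "finite F" "1 \<le> C"
    and "\<And>s j. s \<in> F \<Longrightarrow> j \<in> F \<Longrightarrow> s < j \<Longrightarrow> real (Suc j) \<le> C * real (j - s)"
  shows "F \<subseteq> {..<n} \<Longrightarrow> 1 \<le> n \<Longrightarrow> real (card F) \<le> 1 + C * ln (real n)"
  using assms(1,3)
proof (induction F arbitrary: n rule: finite_linorder_max_induct)
  case empty
  then show ?case
    using assms(2) by simp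
next
  case (insert j F)
  have "j < n" "j \<notin> F"
    using insert.prems(1) insert.hyps(2) by auto
  then have card: "card (insert j F) = Suc (card F)"
    using insert.hyps(1) by simp
  have "0 \<le> C * ln (real n)"
    using assms(2) insert.prems(2) by simp
  show ?case
  proof (cases "F = {}")
    case True
    then show ?thesis
      using card \<open>0 \<le> C * ln (real n)\<close> by simp
  next
    case False
    define s where "s = Max F"
    have s: "s \<in> F" "s < j" "F \<subseteq> {..<Suc s}"
      using False insert.hyps s_def by (auto simp: le_imp_less_Suc)
    have "\<And>s j. s \<in> F \<Longrightarrow> j \<in> F \<Longrightarrow> s < j \<Longrightarrow> real (Suc j) \<le> C * real (j - s)"
      using insert.prems(3) by blast
    then have "real (card F) \<le> 1 + C * ln (real (Suc s))"
      using insert.IH[OF s(3)] by simp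
    also have "\<dots> \<le> C * ln (real (Suc j))"
      using ln_gap[of "real (Suc s)" "real (Suc j)" C] insert.prems(3)[of s j] s
      by (simp add: of_nat_diff)
    also have "\<dots> \<le> C * ln (real n)"
      using \<open>j < n\<close> assms(2) by simp
    finally show ?thesis
      using card by simp
  qed
qed

lemma card_greedy_attractor_le:
  assumes "appear_ok w C" "2 \<le> n"
  shows "real (card (greedy_attractor w \<inter> {..<n})) \<le> 3 * C * ln (real n)"
proof -
  have "1 \<le> C"
    using assms(1) by (rule appear_ok_ge_1)
  have card: "real (card (greedy_attractor w \<inter> {..<n})) \<le> 1 + C * ln (real n)"
    by (rule card_le_ln_if_gaps[OF _ \<open>1 \<le> C\<close>])
      (use greedy_attractor_gap[OF assms(1)] assms(2) in auto)
  have "1 / 2 \<le> ln (2 :: real)"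
    using ln_le_minus_one[of "1 / 2 :: real"] by (simp add: ln_div)
  also have "\<dots> \<le> ln (real n)"
    using assms(2) by simp
  finally have "1 * (1 / 2) \<le> C * ln (real n)"
    using \<open>1 \<le> C\<close> by (intro mult_mono) auto
  then show ?thesis
    using card by linarith
qed

lemma le_appearance_const:
  "\<exists>C. appear_ok w C \<Longrightarrow> (\<And>C. appear_ok w C \<Longrightarrow> x \<le> C) \<Longrightarrow> x \<le> appearance_const w"
  unfolding appearance_const_def by (rule cInf_greatest) auto

theorem theorem21:
  shows "\<exists>K::real. \<forall>w :: nat \<Rightarrow> nat.
           finite (range w) \<and> (\<exists>C. appear_ok w C) \<longrightarrow>
             (\<forall>n. prefix_attractor w (greedy_attractor w \<inter> {..<n}) n) \<and>
             (\<forall>n::nat. n \<ge> 2 \<longrightarrow>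
                real (card (greedy_attractor w \<inter> {..<n})) \<le> K * appearance_const w * ln (real n))"
proof (intro exI[of _ 3] allI impI conjI)
  fix w :: "nat \<Rightarrow> nat" and n :: nat
  show "prefix_attractor w (greedy_attractor w \<inter> {..<n}) n"
    by (rule prefix_attractor_greedy_attractor)
next
  fix w :: "nat \<Rightarrow> nat" and n :: nat
  assume "finite (range w) \<and> (\<exists>C. appear_ok w C)" and "2 \<le> n"
  let ?c = "real (card (greedy_attractor w \<inter> {..<n}))"
  have "0 < 3 * ln (real n)"
    using \<open>2 \<le> n\<close> by simp
  have "?c / (3 * ln (real n)) \<le> appearance_const w"
    using \<open>finite (range w) \<and> (\<exists>C. appear_ok w C)\<close>
  proof (intro le_appearance_const)
    fix C assume "appear_ok w C"
    then show "?c / (3 * ln (real n)) \<le> C"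
      using card_greedy_attractor_le[OF _ \<open>2 \<le> n\<close>] \<open>0 < 3 * ln (real n)\<close>
      by (simp add: divide_le_eq mult.commute mult.left_commute)
  qed blast
  then show "?c \<le> 3 * appearance_const w * ln (real n)"
    using \<open>0 < 3 * ln (real n)\<close> by (simp add: divide_le_eq mult.commute mult.left_commute)
qed

end
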